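(* Let $X_1,\dots,X_n$ be Polish spaces, $1\le k<n$, and $\mu_\alpha\in\mathcal{P}(X_\alpha)$ for $\alpha\in\mathcal{I}_{nk}$. Let $A\subseteq X$ be a measurable set with $\mathrm{sth}(A)=0$. Then there exist measurable sets $Y_\alpha\subseteq X_\alpha$, $\alpha\in\mathcal{I}_{nk}$, with $\mu_\alpha(Y_\alpha)=0$ for all $\alpha$ and $A\subseteq\bigcup_{\alpha\in\mathcal{I}_{nk}}\mathrm{Pr}_\alpha^{-1}(Y_\alpha)$.
   Context: $X=\prod_iX_i$; $\mathcal{I}_{nk}$ is the family of $k$-element subsets of $\{1,\dots,n\}$; $X_\alpha=\prod_{i\in\alpha}X_i$, $\mathrm{Pr}_\alpha:X\to X_\alpha$ the projection. The proper $(n,k)$-thickness of a measurable $A\subseteq X$ is $\mathrm{sth}(A)=\inf\{\sum_{\alpha\in\mathcal{I}_{nk}}\mu_\alpha(Y_\alpha):\ Y_\alpha\subseteq X_\alpha\text{ measurable},\ A\subseteq\bigcup_{\alpha\in\mathcal{I}_{nk}}\mathrm{Pr}_\alpha^{-1}(Y_\alpha)\}$. *)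

theory Defs
  imports "HOL-Probability.Probability"
begin

definition Polish_space :: "'a topology \<Rightarrow> bool" where
  "Polish_space T \<longleftrightarrow> completely_metrizable_space T \<and> separable_space T"

definition borel_of :: "'a topology \<Rightarrow> 'a measure" where
  "borel_of T = sigma (topspace T) {U. openin T U}"

definition I_nk :: "nat \<Rightarrow> nat \<Rightarrow> nat set set" where
  "I_nk n k = {\<alpha>. \<alpha> \<subseteq> {1..n} \<and> card \<alpha> = k}"

text \<open>X_alpha = product of X_i over i in alpha (points are extensional functions on alpha).\<close>
abbreviation X_sub :: "(nat \<Rightarrow> 'a topology) \<Rightarrow> nat set \<Rightarrow> (nat \<Rightarrow> 'a) topology" where
  "X_sub X \<alpha> \<equiv> product_topology X \<alpha>"

definition Pr_preimage :: "(nat \<Rightarrow> 'a topology) \<Rightarrow> nat \<Rightarrow> nat set \<Rightarrow> (nat \<Rightarrow> 'a) set \<Rightarrow> (nat \<Rightarrow> 'a) set" where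
  "Pr_preimage X n \<alpha> Y = {x \<in> topspace (product_topology X {1..n}). restrict x \<alpha> \<in> Y}"

definition sth :: "(nat \<Rightarrow> 'a topology) \<Rightarrow> nat \<Rightarrow> nat \<Rightarrow> (nat set \<Rightarrow> (nat \<Rightarrow> 'a) measure)
    \<Rightarrow> (nat \<Rightarrow> 'a) set \<Rightarrow> ennreal" where
  "sth X n k \<mu> A = Inf {(\<Sum>\<alpha>\<in>I_nk n k. emeasure (\<mu> \<alpha>) (Y \<alpha>)) | Y.
      (\<forall>\<alpha>\<in>I_nk n k. Y \<alpha> \<in> sets (\<mu> \<alpha>)) \<and> A \<subseteq> (\<Union>\<alpha>\<in>I_nk n k. Pr_preimage X n \<alpha> (Y \<alpha>))}"

end

theory Submission
  imports Defs
begin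

text \<open>Since the thickness is an infimum, for every \<open>m\<close> there is an admissible cover
  \<open>Y\<^sub>m\<close> with total measure below \<open>2\<^sup>-\<^sup>m\<close>. Put \<open>Y \<alpha> = limsup\<^sub>m Y\<^sub>m \<alpha>\<close>. By Borel--Cantelli
  each \<open>Y \<alpha>\<close> is a \<open>\<mu>\<^sub>\<alpha>\<close>-null set, and since \<open>\<I>\<^sub>n\<^sub>k\<close> is finite, every point of \<open>A\<close>,
  being covered by some \<open>Y\<^sub>m \<alpha>\<close> for each \<open>m\<close>, is covered by one fixed \<open>\<alpha>\<close> infinitely
  often, i.e. by \<open>Y \<alpha>\<close>.\<close>

lemma mem_limsup_iff: "x \<in> limsup (F :: nat \<Rightarrow> 'b set) \<longleftrightarrow> (\<forall>N. \<exists>m\<ge>N. x \<in> F m)"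
  by (auto simp: limsup_INF_SUP)

lemma INT_UN_subset_UN_limsup:
  fixes F :: "nat \<Rightarrow> 'i \<Rightarrow> 'b set"
  assumes "finite I"
  shows "(\<Inter>m. \<Union>i\<in>I. F m i) \<subseteq> (\<Union>i\<in>I. limsup (\<lambda>m. F m i))"
proof
  fix x assume x: "x \<in> (\<Inter>m. \<Union>i\<in>I. F m i)"
  show "x \<in> (\<Union>i\<in>I. limsup (\<lambda>m. F m i))"
  proof (rule ccontr)
    assume "x \<notin> (\<Union>i\<in>I. limsup (\<lambda>m. F m i))"
    then have "\<forall>i\<in>I. eventually (\<lambda>m. x \<notin> F m i) sequentially"
      by (auto simp: mem_limsup_iff eventually_sequentially)
    then have "eventually (\<lambda>m. \<forall>i\<in>I. x \<notin> F m i) sequentially"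
      using assms by (simp add: eventually_ball_finite)
    then obtain m where "\<forall>i\<in>I. x \<notin> F m i"
      by (auto simp: eventually_sequentially)
    with x show False by blast
  qed
qed

lemma limsup_in_null_sets_geometric:
  assumes sets: "\<And>m. A m \<in> sets M"
    and small: "\<And>m. emeasure M (A m) \<le> ennreal ((1/2)^m)"
  shows "limsup A \<in> null_sets M"
proof (rule borel_cantelli_limsup1[OF sets])
  show "emeasure M (A m) < \<infinity>" for m
    using small[of m] by (metis ennreal_less_top infinity_ennreal_def le_less_trans)
  have bound: "norm (measure M (A m)) \<le> (1/2)^m" for m
    using small[of m] by (simp add: measure_def enn2real_leI)
  show "summable (\<lambda>m. measure M (A m))"
    by (rule summable_comparison_test'[OF summable_geometric bound]) simp
qed

lemma Pr_preimage_limsup: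
  "Pr_preimage X n \<alpha> (limsup F) = limsup (\<lambda>m. Pr_preimage X n \<alpha> (F m))"
  by (auto simp: Pr_preimage_def mem_limsup_iff simp del: topspace_product_topology) blast

lemma finite_I_nk: "finite (I_nk n k)"
  by (rule finite_subset[of _ "Pow {1..n}"]) (auto simp: I_nk_def)

lemma sth_less_ex_cover:
  assumes "sth X n k \<mu> A < e"
  shows "\<exists>Y. (\<forall>\<alpha>\<in>I_nk n k. Y \<alpha> \<in> sets (\<mu> \<alpha>))
      \<and> A \<subseteq> (\<Union>\<alpha>\<in>I_nk n k. Pr_preimage X n \<alpha> (Y \<alpha>))
      \<and> (\<Sum>\<alpha>\<in>I_nk n k. emeasure (\<mu> \<alpha>) (Y \<alpha>)) < e"
  using assms unfolding sth_def by (auto simp: Inf_less_iff)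

theorem mainTheorem11:
  fixes X :: "nat \<Rightarrow> 'a topology"
    and n k :: nat
    and \<mu> :: "nat set \<Rightarrow> (nat \<Rightarrow> 'a) measure"
    and A :: "(nat \<Rightarrow> 'a) set"
  assumes polish: "\<And>i. i \<in> {1..n} \<Longrightarrow> Polish_space (X i)"
    and k: "1 \<le> k" "k < n"
    and prob: "\<And>\<alpha>. \<alpha> \<in> I_nk n k \<Longrightarrow> prob_space (\<mu> \<alpha>)"
    and sets_mu: "\<And>\<alpha>. \<alpha> \<in> I_nk n k \<Longrightarrow> sets (\<mu> \<alpha>) = sets (borel_of (X_sub X \<alpha>))"
    and A_meas: "A \<in> sets (borel_of (product_topology X {1..n}))"
    and sth0: "sth X n k \<mu> A = 0"
  shows "\<exists>Y. (\<forall>\<alpha>\<in>I_nk n k. Y \<alpha> \<in> sets (\<mu> \<alpha>) \<and> emeasure (\<mu> \<alpha>) (Y \<alpha>) = 0)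
            \<and> A \<subseteq> (\<Union>\<alpha>\<in>I_nk n k. Pr_preimage X n \<alpha> (Y \<alpha>))"
proof -
  let ?I = "I_nk n k"
  have "\<exists>Y. (\<forall>\<alpha>\<in>?I. Y \<alpha> \<in> sets (\<mu> \<alpha>)) \<and> A \<subseteq> (\<Union>\<alpha>\<in>?I. Pr_preimage X n \<alpha> (Y \<alpha>))
        \<and> (\<Sum>\<alpha>\<in>?I. emeasure (\<mu> \<alpha>) (Y \<alpha>)) < ennreal ((1/2)^m)" for m
    using sth_less_ex_cover[of X n k \<mu> A] sth0 by simp
  then obtain Ym where Ym_sets: "\<And>m. \<forall>\<alpha>\<in>?I. Ym m \<alpha> \<in> sets (\<mu> \<alpha>)"
    and Ym_cover: "\<And>m. A \<subseteq> (\<Union>\<alpha>\<in>?I. Pr_preimage X n \<alpha> (Ym m \<alpha>))"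
    and Ym_small: "\<And>m. (\<Sum>\<alpha>\<in>?I. emeasure (\<mu> \<alpha>) (Ym m \<alpha>)) < ennreal ((1/2)^m)"
    by metis
  define Y where "Y \<alpha> = limsup (\<lambda>m. Ym m \<alpha>)" for \<alpha>
  have "Y \<alpha> \<in> null_sets (\<mu> \<alpha>)" if "\<alpha> \<in> ?I" for \<alpha>
    unfolding Y_def
  proof (rule limsup_in_null_sets_geometric)
    show "Ym m \<alpha> \<in> sets (\<mu> \<alpha>)" for m using Ym_sets that by blast
    have "emeasure (\<mu> \<alpha>) (Ym m \<alpha>) \<le> (\<Sum>\<alpha>\<in>?I. emeasure (\<mu> \<alpha>) (Ym m \<alpha>))" for m
      using that finite_I_nk by (intro member_le_sum) auto
    then show "emeasure (\<mu> \<alpha>) (Ym m \<alpha>) \<le> ennreal ((1/2)^m)" for m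
      using Ym_small[of m] by (meson less_imp_le order_trans)
  qed
  moreover have "A \<subseteq> (\<Union>\<alpha>\<in>?I. Pr_preimage X n \<alpha> (Y \<alpha>))"
  proof -
    have "A \<subseteq> (\<Inter>m. \<Union>\<alpha>\<in>?I. Pr_preimage X n \<alpha> (Ym m \<alpha>))"
      using Ym_cover by blast
    also have "\<dots> \<subseteq> (\<Union>\<alpha>\<in>?I. limsup (\<lambda>m. Pr_preimage X n \<alpha> (Ym m \<alpha>)))"
      by (rule INT_UN_subset_UN_limsup[OF finite_I_nk])
    also have "\<dots> = (\<Union>\<alpha>\<in>?I. Pr_preimage X n \<alpha> (Y \<alpha>))"
      by (simp add: Y_def Pr_preimage_limsup)
    finally show ?thesis .
  qed
  ultimately show ?thesis by (auto simp: null_sets_def)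
qed

end
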